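(* Let $A \in SL(2,\mathbb{Z})$. Then for every $k \geq 1$ there is an integer $1 \leq d \leq 6^k$ such that \[ I + A + A^2 + \cdots + A^{d-1} \equiv 0 \mod 3^k, \] where $I$ is the identity matrix and the congruence is entrywise. *)

theory Defs
  imports "HOL-Analysis.Analysis"
begin

fun mat_power :: "'a::comm_ring_1^'n^'n \<Rightarrow> nat \<Rightarrow> 'a^'n^'n" where
  "mat_power A 0 = mat 1"
| "mat_power A (Suc n) = A ** mat_power A n"

end

theory Submission
  imports Defs
begin

text \<open>
  Write S d = I + A + ... + A^(d-1). Since A^d = I + (A - I) S d, a congruence
  S d = 0 mod 3^j with j \<ge> 1 forces A^d = I mod 3, and then
  S (3d) = (I + A^d + A^(2d)) S d = 0 mod 3^(j+1): tripling d gains a factor of 3.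
  The induction starts from Cayley-Hamilton, A^2 = t A - I with t = tr A, which yields
  S 3 = (t + 1) A, S 4 = t (A + A^2) and S 6 = (t - 1) ((t + 1) A - I) S 3,
  and whatever t mod 3 is, one of these vanishes mod 3. Hence S d = 0 mod 3^k
  for some d \<le> 2 * 3^k \<le> 6^k.
\<close>

definition mat_dvd :: "'a::comm_ring_1 \<Rightarrow> 'a^'n^'m \<Rightarrow> bool" where
  "mat_dvd c M \<longleftrightarrow> (\<forall>i j. c dvd M $ i $ j)"

lemma mat_dvd_add: "mat_dvd c M \<Longrightarrow> mat_dvd c N \<Longrightarrow> mat_dvd c (M + N)"
  by (simp add: mat_dvd_def)

lemma mat_dvd_trans: "c dvd c' \<Longrightarrow> mat_dvd c' M \<Longrightarrow> mat_dvd c M"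
  unfolding mat_dvd_def by (meson dvd_trans)

lemma mat_dvd_mult: "mat_dvd a M \<Longrightarrow> mat_dvd b N \<Longrightarrow> mat_dvd (a * b) (M ** N)"
  unfolding mat_dvd_def matrix_matrix_mult_def by (auto intro!: dvd_sum mult_dvd_mono)

lemma mat_dvd_mult_left: "mat_dvd c N \<Longrightarrow> mat_dvd c (M ** N)"
  using mat_dvd_mult[of 1 M c N] by (simp add: mat_dvd_def)

lemma mat_dvd_mult_right: "mat_dvd c M \<Longrightarrow> mat_dvd c (M ** N)"
  using mat_dvd_mult[of c M 1 N] by (simp add: mat_dvd_def)

lemma mat_mult_entry: "(mat a ** M) $ i $ j = a * M $ i $ j"
  by (simp add: matrix_matrix_mult_def mat_def if_distrib if_distribR cong: if_cong)

lemma mat_dvd_scalar_mult: "c dvd a \<Longrightarrow> mat_dvd c (mat a ** M)"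
  by (simp add: mat_dvd_def mat_mult_entry)

lemma matrix_add_rdistrib: "(A + B) ** C = A ** C + B ** C"
  by (vector matrix_matrix_mult_def sum.distrib[symmetric] algebra_simps)

lemma matrix_diff_rdistrib: "(A - B) ** C = A ** C - B ** (C :: 'a::comm_ring_1^_^_)"
  by (vector matrix_matrix_mult_def sum_subtractf[symmetric] algebra_simps)

lemma mat_power_add: "mat_power A (m + n) = mat_power A m ** mat_power A n"
  by (induction m) (auto simp: matrix_mul_assoc)

lemma sum_mat_power_add:
  "(\<Sum>m<d + n. mat_power A m) = (\<Sum>m<d. mat_power A m) + mat_power A d ** (\<Sum>m<n. mat_power A m)"
  by (induction n) (simp_all add: mat_power_add matrix_add_ldistrib add.assoc)

lemma mat_power_telescope: "(A - mat 1) ** (\<Sum>m<d. mat_power A m) = mat_power A d - mat 1"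
  by (induction d) (simp_all add: matrix_add_ldistrib matrix_diff_rdistrib)

lemma sum_mat_power_triple:
  "(\<Sum>m<3 * d. mat_power A m)
    = (mat 1 + mat_power A d + mat_power A d ** mat_power A d) ** (\<Sum>m<d. mat_power A m)"
proof -
  have "3 * d = d + (d + d)" by simp
  then show ?thesis
    by (simp only: sum_mat_power_add)
      (simp add: matrix_add_ldistrib matrix_add_rdistrib matrix_mul_assoc
        add.assoc)
qed

lemma mat_dvd_3_geometric:
  fixes P :: "'a::comm_ring_1^'n^'n"
  assumes "mat_dvd 3 (P - mat 1)"
  shows "mat_dvd 3 (mat 1 + P + P ** P)"
proof -
  define E where "E = P - mat 1"
  then have "P = mat 1 + E" by simp
  then have "mat 1 + P + P ** P = (mat 1 + mat 1 + mat 1) + (E + E + E) + E ** E"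
    by (simp add: matrix_add_ldistrib matrix_add_rdistrib algebra_simps)
  moreover have "mat_dvd 3 (mat 1 + mat 1 + mat 1 :: 'a^'n^'n)"
    by (simp add: mat_dvd_def mat_def)
  moreover have "mat_dvd 3 (E + E + E)"
    by (simp add: mat_dvd_def)
  moreover have "mat_dvd 3 (E ** E)"
    using assms by (simp add: E_def mat_dvd_mult_left)
  ultimately show ?thesis by (metis mat_dvd_add)
qed

lemma mat_dvd_sum_mat_power_triple:
  fixes A :: "'a::comm_ring_1^'n^'n"
  assumes "mat_dvd (3 ^ j) (\<Sum>m<d. mat_power A m)" and "j \<ge> 1"
  shows "mat_dvd (3 ^ Suc j) (\<Sum>m<3 * d. mat_power A m)"
proof -
  have "mat_dvd (3 ^ j) (mat_power A d - mat 1)"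
    using assms(1) by (metis mat_power_telescope mat_dvd_mult_left)
  then have "mat_dvd 3 (mat_power A d - mat 1)"
    using assms(2) by (intro mat_dvd_trans[of 3 "3 ^ j"]) (simp_all add: dvd_power)
  then show ?thesis
    using mat_dvd_mult[OF mat_dvd_3_geometric assms(1)] by (simp add: sum_mat_power_triple)
qed

lemma sum_mat_power_3:
  fixes A :: "'a::idom^2^2"
  assumes "det A = 1"
  shows "(\<Sum>m<3. mat_power A m) = mat (trace A + 1) ** A"
proof -
  have det: "A$1$1 * A$2$2 - A$1$2 * A$2$1 = 1" using assms by (simp add: det_2)
  show ?thesis
    unfolding vec_eq_iff forall_2
    by (intro conjI; simp add: matrix_matrix_mult_def sum_2 mat_def trace_def
        numeral_eq_Suc lessThan_Suc) (use det in algebra)+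
qed

lemma sum_mat_power_4:
  fixes A :: "'a::idom^2^2"
  assumes "det A = 1"
  shows "(\<Sum>m<4. mat_power A m) = mat (trace A) ** (A + A ** A)"
proof -
  have det: "A$1$1 * A$2$2 - A$1$2 * A$2$1 = 1" using assms by (simp add: det_2)
  show ?thesis
    unfolding vec_eq_iff forall_2
    by (intro conjI; simp add: matrix_matrix_mult_def sum_2 mat_def trace_def
        numeral_eq_Suc lessThan_Suc) (use det in algebra)+
qed

lemma sum_mat_power_6:
  fixes A :: "'a::idom^2^2"
  assumes "det A = 1"
  shows "(\<Sum>m<6. mat_power A m)
    = mat (trace A - 1) ** (mat (trace A + 1) ** A - mat 1) ** (\<Sum>m<3. mat_power A m)"
proof -
  have det: "A$1$1 * A$2$2 - A$1$2 * A$2$1 = 1" using assms by (simp add: det_2)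
  show ?thesis
    unfolding vec_eq_iff forall_2
    by (intro conjI; simp add: matrix_matrix_mult_def sum_2 mat_def trace_def
        numeral_eq_Suc lessThan_Suc) (use det in algebra)+
qed

lemma mat_dvd_3_sum_mat_power:
  fixes A :: "int^2^2"
  assumes "det A = 1"
  shows "\<exists>d. 1 \<le> d \<and> d \<le> 6 \<and> mat_dvd 3 (\<Sum>m<d. mat_power A m)"
proof -
  have "3 dvd trace A \<or> 3 dvd trace A - 1 \<or> 3 dvd trace A + 1" by presburger
  then show ?thesis
  proof (elim disjE)
    assume "3 dvd trace A"
    then show ?thesis
      by (intro exI[of _ 4]) (simp add: sum_mat_power_4[OF assms] mat_dvd_scalar_mult)
  next
    assume "3 dvd trace A - 1"
    then show ?thesis
      by (intro exI[of _ 6]) (simp add: sum_mat_power_6[OF assms] mat_dvd_scalar_mult mat_dvd_mult_right)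
  next
    assume "3 dvd trace A + 1"
    then show ?thesis
      by (intro exI[of _ 3]) (simp add: sum_mat_power_3[OF assms] mat_dvd_scalar_mult)
  qed
qed

lemma mat_dvd_pow3_sum_mat_power:
  fixes A :: "int^2^2"
  assumes "det A = 1" and "k \<ge> 1"
  shows "\<exists>d. 1 \<le> d \<and> d \<le> 2 * 3 ^ k \<and> mat_dvd (3 ^ k) (\<Sum>m<d. mat_power A m)"
  using assms(2)
proof (induction k rule: nat_induct_at_least)
  case base
  then show ?case using mat_dvd_3_sum_mat_power[OF assms(1)] by simp
next
  case (Suc k)
  then obtain d where "1 \<le> d" "d \<le> 2 * 3 ^ k"
    and dvd: "mat_dvd (3 ^ k) (\<Sum>m<d. mat_power A m)"
    by blast
  then show ?case
    using mat_dvd_sum_mat_power_triple[OF dvd Suc.hyps] by (intro exI[of _ "3 * d"]) simp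
qed

theorem lemma5p30:
  fixes A :: "int^2^2" and k :: nat
  assumes "det A = 1" and "k \<ge> 1"
  shows "\<exists>d::nat. 1 \<le> d \<and> d \<le> 6 ^ k \<and>
           (\<forall>i j. (3::int) ^ k dvd (\<Sum>m<d. mat_power A m) $ i $ j)"
proof -
  obtain d where d: "1 \<le> d" "d \<le> 2 * 3 ^ k" "mat_dvd (3 ^ k) (\<Sum>m<d. mat_power A m)"
    using mat_dvd_pow3_sum_mat_power[OF assms] by blast
  have "2 * 3 ^ k \<le> (2 ^ k * 3 ^ k :: nat)"
    using power_increasing[OF assms(2), of "2::nat"] by simp
  then have "d \<le> 6 ^ k"
    using d(2) by (simp add: power_mult_distrib[symmetric])
  with d(1,3) show ?thesis
    unfolding mat_dvd_def by blast
qed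

end
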